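(* For $\alpha_2\in\mathbb{C}$ consider the Hamiltonian system $$\frac{dq_1}{dt}=q_1^2+p_2,\quad \frac{dp_1}{dt}=-2q_1p_1+\alpha_2-\frac12,\quad \frac{dq_2}{dt}=-3p_2^2+p_1+\frac t2,\quad \frac{dp_2}{dt}=q_2,$$ with Hamiltonian $H=q_1^2p_1+(\frac12-\alpha_2)q_1-p_2^3+\frac t2p_2-\frac{q_2^2}{2}+p_1p_2$. Write $P:=p_1+t-2p_2^2+4q_1(q_2+q_1p_2)$ and $( * )=(q_1,p_1,q_2,p_2,t;\alpha_2)$. Define $$s_0:( * )\mapsto\left(q_1+\frac{\frac12-\alpha_2}{p_1},\,p_1,\,q_2,\,p_2,\,t;\,1-\alpha_2\right),$$ $$s_1:( * )\mapsto\Big(q_1+\frac{2\alpha_2+1}{2P},\ p_1-\frac{2(2\alpha_2+1)(q_2+2q_1p_2)}{P}+\frac{(2\alpha_2+1)^2(p_2+2q_1^2)}{P^2},$$ $$q_2-\frac{2(2\alpha_2+1)(p_2-q_1^2)}{P}+\frac{3(2\alpha_2+1)^2q_1}{P^2}+\frac{(2\alpha_2+1)^3}{2P^3},\ p_2-\frac{2(2\alpha_2+1)q_1}{P}-\frac{(2\alpha_2+1)^2}{2P^2},\ t;\,-1-\alpha_2\Big),$$ $$\pi:( * )\mapsto\left(-q_1,\,-P,\,-(q_2+4q_1(q_1^2+p_2)),\,-(p_2+2q_1^2),\,t;\,-\alpha_2\right).$$ Then $s_0,s_1,\pi$ are Bäcklund transformations of this system (each maps solutions of the system with parameter $\alpha_2$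 to solutions of the system with the transformed parameter), and they generate a group of Bäcklund transformations realizing the extended affine Weyl group of type $A_1^{(1)}$.
   Context: The extended affine Weyl group of type $A_1^{(1)}$ is the group generated by $s_0,s_1,\pi$ with the relations $s_0^2=s_1^2=\pi^2=1$ and $\pi s_0=s_1\pi$. A transformation is applied to a rational function $g$ of $(q_1,p_1,q_2,p_2,t,\alpha_2)$ by substituting the images of the variables and the parameter into $g$. *)

theory Defs
  imports "HOL-Analysis.Analysis"
begin

type_synonym pt = "complex \<times> complex \<times> complex \<times> complex \<times> complex \<times> complex"

definition c_q1 :: "pt \<Rightarrow> complex" where "c_q1 x = fst x"
definition c_p1 :: "pt \<Rightarrow> complex" where "c_p1 x = fst (snd x)"
definition c_q2 :: "pt \<Rightarrow> complex" where "c_q2 x = fst (snd (snd x))"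
definition c_p2 :: "pt \<Rightarrow> complex" where "c_p2 x = fst (snd (snd (snd x)))"
definition c_t  :: "pt \<Rightarrow> complex" where "c_t x = fst (snd (snd (snd (snd x))))"
definition c_a  :: "pt \<Rightarrow> complex" where "c_a x = snd (snd (snd (snd (snd x))))"

definition is_solution ::
  "complex \<Rightarrow> (complex \<Rightarrow> complex) \<Rightarrow> (complex \<Rightarrow> complex) \<Rightarrow>
   (complex \<Rightarrow> complex) \<Rightarrow> (complex \<Rightarrow> complex) \<Rightarrow> complex set \<Rightarrow> bool" where
  "is_solution a q1 p1 q2 p2 U \<longleftrightarrow> open U \<and>
     (\<forall>t\<in>U. (q1 has_field_derivative (q1 t ^ 2 + p2 t)) (at t) \<and>
             (p1 has_field_derivative (- 2 * q1 t * p1 t + a - 1/2)) (at t) \<and>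
             (q2 has_field_derivative (- 3 * p2 t ^ 2 + p1 t + t / 2)) (at t) \<and>
             (p2 has_field_derivative (q2 t)) (at t))"

text \<open>The Hamiltonian (for reference; the system above is its Hamilton system).\<close>
definition Ham :: "pt \<Rightarrow> complex" where
  "Ham x = (case x of (q1, p1, q2, p2, t, a) \<Rightarrow>
     q1^2 * p1 + (1/2 - a) * q1 - p2^3 + t/2 * p2 - q2^2/2 + p1 * p2)"

definition PP :: "pt \<Rightarrow> complex" where
  "PP x = (case x of (q1, p1, q2, p2, t, a) \<Rightarrow>
     p1 + t - 2 * p2^2 + 4 * q1 * (q2 + q1 * p2))"

definition s0 :: "pt \<Rightarrow> pt" where
  "s0 x = (case x of (q1, p1, q2, p2, t, a) \<Rightarrow>
     (q1 + (1/2 - a) / p1, p1, q2, p2, t, 1 - a))"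

definition s1 :: "pt \<Rightarrow> pt" where
  "s1 x = (case x of (q1, p1, q2, p2, t, a) \<Rightarrow>
     (let P = PP x; b = 2 * a + 1 in
     (q1 + b / (2 * P),
      p1 - 2 * b * (q2 + 2 * q1 * p2) / P + b^2 * (p2 + 2 * q1^2) / P^2,
      q2 - 2 * b * (p2 - q1^2) / P + 3 * b^2 * q1 / P^2 + b^3 / (2 * P^3),
      p2 - 2 * b * q1 / P - b^2 / (2 * P^2),
      t, - 1 - a)))"

definition pi_map :: "pt \<Rightarrow> pt" where
  "pi_map x = (case x of (q1, p1, q2, p2, t, a) \<Rightarrow>
     (- q1, - PP x, - (q2 + 4 * q1 * (q1^2 + p2)), - (p2 + 2 * q1^2), t, - a))"

definition backlund :: "(pt \<Rightarrow> pt) \<Rightarrow> (pt \<Rightarrow> bool) \<Rightarrow> (complex \<Rightarrow> complex) \<Rightarrow> bool" where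
  "backlund w D tau \<longleftrightarrow>
    (\<forall>a q1 p1 q2 p2 U.
       is_solution a q1 p1 q2 p2 U \<and> (\<forall>t\<in>U. D (q1 t, p1 t, q2 t, p2 t, t, a)) \<longrightarrow>
       (let W = (\<lambda>t. w (q1 t, p1 t, q2 t, p2 t, t, a)) in
         (\<forall>t\<in>U. c_t (W t) = t \<and> c_a (W t) = tau a) \<and>
         is_solution (tau a) (\<lambda>t. c_q1 (W t)) (\<lambda>t. c_p1 (W t))
                     (\<lambda>t. c_q2 (W t)) (\<lambda>t. c_p2 (W t)) U))"

end

theory Submission
  imports Defs
begin

text \<open>The map s1 is the time-v map, v = (2 alpha2 + 1) / (2 P), of a polynomial one-parameter
  group on (q1, p1, q2, p2) which preserves P; since v changes sign under alpha2 \<mapsto> -1 - alpha2,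
  s1 is an involution. Along a solution P' = 2 q1 P + alpha2 + 1/2, so v solves the Riccati
  equation v' = -2 q1 v - v^2, and flowing a solution by any solution v of this Riccati equation
  gives a solution with parameter alpha2 - 2 v P = -1 - alpha2. Finally pi conjugates the flow
  into a translation of q1, which gives s0 pi = pi s1.\<close>

lemma c_components [simp]:
  "c_q1 (q1, p1, q2, p2, t, a) = q1" "c_p1 (q1, p1, q2, p2, t, a) = p1"
  "c_q2 (q1, p1, q2, p2, t, a) = q2" "c_p2 (q1, p1, q2, p2, t, a) = p2"
  "c_t (q1, p1, q2, p2, t, a) = t" "c_a (q1, p1, q2, p2, t, a) = a"
  by (simp_all add: c_q1_def c_p1_def c_q2_def c_p2_def c_t_def c_a_def)

definition map_param :: "(complex \<Rightarrow> complex) \<Rightarrow> pt \<Rightarrow> pt" where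
  "map_param f x = (case x of (q1, p1, q2, p2, t, a) \<Rightarrow> (q1, p1, q2, p2, t, f a))"

lemma map_param_tuple: "map_param f (q1, p1, q2, p2, t, a) = (q1, p1, q2, p2, t, f a)"
  by (simp add: map_param_def)

definition s1_flow :: "complex \<Rightarrow> pt \<Rightarrow> pt" where
  "s1_flow v x = (case x of (q1, p1, q2, p2, t, a) \<Rightarrow>
     (q1 + v,
      p1 - 4 * v * (q2 + 2 * q1 * p2) + 4 * v^2 * (p2 + 2 * q1^2),
      q2 - 4 * v * (p2 - q1^2) + 12 * v^2 * q1 + 4 * v^3,
      p2 - 4 * v * q1 - 2 * v^2, t, a))"

lemma s1_flow_zero: "s1_flow 0 x = x"
  by (induction x rule: prod_induct6) (simp add: s1_flow_def)

lemma s1_flow_add: "s1_flow u (s1_flow v x) = s1_flow (u + v) x"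
  by (induction x rule: prod_induct6) (simp add: s1_flow_def, algebra)

lemma PP_s1_flow: "PP (s1_flow v x) = PP x"
  by (induction x rule: prod_induct6) (simp add: s1_flow_def PP_def, algebra)

lemma pi_map_s1_flow: "pi_map (s1_flow v x) = (- c_q1 x - v, snd (pi_map x))"
  by (induction x rule: prod_induct6) (simp add: s1_flow_def pi_map_def PP_def, algebra)

lemma s1_flow_map_param: "s1_flow v (map_param f x) = map_param f (s1_flow v x)"
  by (induction x rule: prod_induct6) (simp add: s1_flow_def map_param_tuple)

lemma PP_map_param: "PP (map_param f x) = PP x"
  by (induction x rule: prod_induct6) (simp add: map_param_tuple PP_def)

lemma c_a_map_param: "c_a (map_param f x) = f (c_a x)"
  by (induction x rule: prod_induct6) (simp add: map_param_tuple)

lemma c_a_s1_flow: "c_a (s1_flow v x) = c_a x"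
  by (induction x rule: prod_induct6) (simp add: s1_flow_def)

lemma s1_eq_s1_flow:
  "s1 x = s1_flow ((2 * c_a x + 1) / (2 * PP x)) (map_param (\<lambda>a. - 1 - a) x)"
proof (cases x)
  case (fields q1 p1 q2 p2 t a)
  show ?thesis
  proof (cases "PP x = 0")
    case True
    then show ?thesis by (simp add: fields s1_def s1_flow_def map_param_tuple)
  next
    case False
    then show ?thesis
      by (simp add: fields s1_def s1_flow_def map_param_tuple Let_def field_simps power2_eq_square power3_eq_cube)
  qed
qed

lemma map_param_map_param: "map_param f (map_param g x) = map_param (f \<circ> g) x"
  by (induction x rule: prod_induct6) (simp add: map_param_tuple)

lemma map_param_ident: "map_param (\<lambda>a. a) x = x"
  by (induction x rule: prod_induct6) (simp add: map_param_tuple)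

lemma c_a_s1: "c_a (s1 x) = - 1 - c_a x"
  by (simp add: s1_eq_s1_flow c_a_s1_flow c_a_map_param)

lemma PP_s1: "PP (s1 x) = PP x"
  by (simp add: s1_eq_s1_flow PP_s1_flow PP_map_param)

lemma s1_s1: "s1 (s1 x) = x"
proof -
  define v where "v = (2 * c_a x + 1) / (2 * PP x)"
  have coeff: "(2 * c_a (s1 x) + 1) / (2 * PP (s1 x)) = - v"
    unfolding v_def c_a_s1 PP_s1 by (simp add: minus_divide_left algebra_simps)
  have "s1 (s1 x) = s1_flow ((2 * c_a (s1 x) + 1) / (2 * PP (s1 x))) (map_param (\<lambda>a. - 1 - a) (s1 x))"
    by (rule s1_eq_s1_flow)
  also have "\<dots> = s1_flow (- v) (map_param (\<lambda>a. - 1 - a) (s1_flow v (map_param (\<lambda>a. - 1 - a) x)))"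
    by (simp only: coeff, simp only: s1_eq_s1_flow[of x] v_def)
  also have "\<dots> = s1_flow (- v) (s1_flow v x)"
    by (simp add: s1_flow_map_param map_param_map_param comp_def map_param_ident)
  also have "\<dots> = x"
    by (simp add: s1_flow_add s1_flow_zero)
  finally show ?thesis .
qed

lemma s0_s0: "s0 (s0 x) = x"
  by (induction x rule: prod_induct6) (simp add: s0_def diff_divide_distrib)

lemma pi_map_pi_map: "pi_map (pi_map x) = x"
  by (induction x rule: prod_induct6) (simp add: pi_map_def PP_def, algebra)

lemma s0_pi_map: "s0 (pi_map x) = pi_map (s1 x)"
proof (induction x rule: prod_induct6)
  case (fields q1 p1 q2 p2 t a)
  define P where "P = PP (q1, p1, q2, p2, t, a)"
  define v where "v = (2 * a + 1) / (2 * P)"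
  have "pi_map (s1 (q1, p1, q2, p2, t, a)) = (- q1 - v, snd (pi_map (q1, p1, q2, p2, t, - 1 - a)))"
    unfolding s1_eq_s1_flow pi_map_s1_flow by (simp add: map_param_tuple P_def v_def)
  also have "\<dots> = (- q1 - v, - P, - (q2 + 4 * q1 * (q1^2 + p2)), - (p2 + 2 * q1^2), t, 1 + a)"
    by (simp add: pi_map_def PP_def P_def)
  also have "- q1 - v = - q1 + (1/2 - - a) / - P"
    by (cases "P = 0") (simp_all add: v_def field_simps)
  also have "(\<dots>, - P, - (q2 + 4 * q1 * (q1^2 + p2)), - (p2 + 2 * q1^2), t, 1 + a) = s0 (pi_map (q1, p1, q2, p2, t, a))"
    by (simp add: s0_def pi_map_def P_def)
  finally show ?case ..
qed

definition solves_at ::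
  "complex \<Rightarrow> (complex \<Rightarrow> complex) \<Rightarrow> (complex \<Rightarrow> complex) \<Rightarrow>
   (complex \<Rightarrow> complex) \<Rightarrow> (complex \<Rightarrow> complex) \<Rightarrow> complex \<Rightarrow> bool" where
  "solves_at a q1 p1 q2 p2 t \<longleftrightarrow>
     (q1 has_field_derivative (q1 t ^ 2 + p2 t)) (at t) \<and>
     (p1 has_field_derivative (- 2 * q1 t * p1 t + a - 1/2)) (at t) \<and>
     (q2 has_field_derivative (- 3 * p2 t ^ 2 + p1 t + t / 2)) (at t) \<and>
     (p2 has_field_derivative (q2 t)) (at t)"

lemma solves_atD:
  assumes "solves_at a q1 p1 q2 p2 t"
  shows "(q1 has_field_derivative (q1 t ^ 2 + p2 t)) (at t)"
    and "(p1 has_field_derivative (- 2 * q1 t * p1 t + a - 1/2)) (at t)"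
    and "(q2 has_field_derivative (- 3 * p2 t ^ 2 + p1 t + t / 2)) (at t)"
    and "(p2 has_field_derivative (q2 t)) (at t)"
  using assms by (simp_all add: solves_at_def)

lemma is_solution_iff_solves_at:
  "is_solution a q1 p1 q2 p2 U \<longleftrightarrow> open U \<and> (\<forall>t\<in>U. solves_at a q1 p1 q2 p2 t)"
  by (simp add: is_solution_def solves_at_def)

lemma backlund_if_solves_at:
  assumes "\<And>x. c_t (w x) = c_t x" and "\<And>x. c_a (w x) = tau (c_a x)"
    and "\<And>a q1 p1 q2 p2 t. solves_at a q1 p1 q2 p2 t \<Longrightarrow> D (q1 t, p1 t, q2 t, p2 t, t, a) \<Longrightarrow>
      solves_at (tau a)
        (\<lambda>s. c_q1 (w (q1 s, p1 s, q2 s, p2 s, s, a))) (\<lambda>s. c_p1 (w (q1 s, p1 s, q2 s, p2 s, s, a)))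
        (\<lambda>s. c_q2 (w (q1 s, p1 s, q2 s, p2 s, s, a))) (\<lambda>s. c_p2 (w (q1 s, p1 s, q2 s, p2 s, s, a))) t"
  shows "backlund w D tau"
  using assms by (auto simp: backlund_def is_solution_iff_solves_at)

lemma solves_at_s0:
  assumes "solves_at a q1 p1 q2 p2 t" and "p1 t \<noteq> 0"
  shows "solves_at (1 - a)
    (\<lambda>s. c_q1 (s0 (q1 s, p1 s, q2 s, p2 s, s, a))) (\<lambda>s. c_p1 (s0 (q1 s, p1 s, q2 s, p2 s, s, a)))
    (\<lambda>s. c_q2 (s0 (q1 s, p1 s, q2 s, p2 s, s, a))) (\<lambda>s. c_p2 (s0 (q1 s, p1 s, q2 s, p2 s, s, a))) t"
proof -
  note derivs = solves_atD[OF assms(1)]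
  have "((\<lambda>s. q1 s + (1/2 - a) / p1 s) has_field_derivative
          (q1 t + (1/2 - a) / p1 t) ^ 2 + p2 t) (at t)"
    using assms(2)
    by (auto intro!: derivative_eq_intros derivs simp: field_simps power2_eq_square)
  moreover have "(p1 has_field_derivative
      (- 2 * (q1 t + (1/2 - a) / p1 t) * p1 t + (1 - a) - 1/2)) (at t)"
  proof -
    have "- 2 * (q1 t + (1/2 - a) / p1 t) * p1 t + (1 - a) - 1/2 = - 2 * q1 t * p1 t + a - 1/2"
      using assms(2) by (simp add: field_simps)
    then show ?thesis using derivs(2) by (simp only:)
  qed
  ultimately show ?thesis
    using derivs(3,4) unfolding solves_at_def s0_def by simp
qed

lemma solves_at_pi_map:
  assumes "solves_at a q1 p1 q2 p2 t"
  shows "solves_at (- a)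
    (\<lambda>s. c_q1 (pi_map (q1 s, p1 s, q2 s, p2 s, s, a))) (\<lambda>s. c_p1 (pi_map (q1 s, p1 s, q2 s, p2 s, s, a)))
    (\<lambda>s. c_q2 (pi_map (q1 s, p1 s, q2 s, p2 s, s, a))) (\<lambda>s. c_p2 (pi_map (q1 s, p1 s, q2 s, p2 s, s, a))) t"
proof -
  note derivs = solves_atD[OF assms]
  show ?thesis
    unfolding solves_at_def pi_map_def PP_def c_components prod.case
    by (intro conjI; (rule derivative_eq_intros derivs refl | simp)+; simp add: field_simps; algebra)
qed

lemma PP_has_derivative_along_solution:
  assumes "solves_at a q1 p1 q2 p2 t"
  shows "((\<lambda>s. PP (q1 s, p1 s, q2 s, p2 s, s, b)) has_field_derivative
           2 * q1 t * PP (q1 t, p1 t, q2 t, p2 t, t, b) + (2 * a + 1) / 2) (at t)"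
  unfolding PP_def prod.case
  by (rule derivative_eq_intros solves_atD[OF assms] refl | simp)+ (simp add: field_simps, algebra)

lemma solves_at_s1_flow:
  assumes "solves_at a q1 p1 q2 p2 t"
    and "(v has_field_derivative (- 2 * q1 t * v t - v t ^ 2)) (at t)"
  shows "solves_at (a - 2 * v t * PP (q1 t, p1 t, q2 t, p2 t, t, b))
    (\<lambda>s. c_q1 (s1_flow (v s) (q1 s, p1 s, q2 s, p2 s, s, b)))
    (\<lambda>s. c_p1 (s1_flow (v s) (q1 s, p1 s, q2 s, p2 s, s, b)))
    (\<lambda>s. c_q2 (s1_flow (v s) (q1 s, p1 s, q2 s, p2 s, s, b)))
    (\<lambda>s. c_p2 (s1_flow (v s) (q1 s, p1 s, q2 s, p2 s, s, b))) t"
proof -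
  note derivs = solves_atD[OF assms(1)] assms(2)
  show ?thesis
    unfolding solves_at_def s1_flow_def PP_def c_components prod.case
    by (intro conjI; (rule derivative_eq_intros derivs refl | simp)+; simp add: field_simps; algebra)
qed

lemma solves_at_s1:
  assumes "solves_at a q1 p1 q2 p2 t" and "PP (q1 t, p1 t, q2 t, p2 t, t, a) \<noteq> 0"
  shows "solves_at (- 1 - a)
    (\<lambda>s. c_q1 (s1 (q1 s, p1 s, q2 s, p2 s, s, a))) (\<lambda>s. c_p1 (s1 (q1 s, p1 s, q2 s, p2 s, s, a)))
    (\<lambda>s. c_q2 (s1 (q1 s, p1 s, q2 s, p2 s, s, a))) (\<lambda>s. c_p2 (s1 (q1 s, p1 s, q2 s, p2 s, s, a))) t"
proof -
  define P where "P s = PP (q1 s, p1 s, q2 s, p2 s, s, a)" for s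
  define v where "v s = (2 * a + 1) / (2 * P s)" for s
  have P_param: "PP (q1 s, p1 s, q2 s, p2 s, s, b) = P s" for s b
    by (simp add: P_def PP_def)
  have s1_curve: "s1 (q1 s, p1 s, q2 s, p2 s, s, a) = s1_flow (v s) (q1 s, p1 s, q2 s, p2 s, s, - 1 - a)" for s
    by (simp add: s1_eq_s1_flow map_param_tuple v_def P_def)
  have "P t \<noteq> 0"
    using assms(2) by (simp add: P_def)
  have "(v has_field_derivative (- 2 * q1 t * v t - v t ^ 2)) (at t)"
    unfolding v_def P_def
    using PP_has_derivative_along_solution[OF assms(1), of a] \<open>P t \<noteq> 0\<close>
    by (auto intro!: derivative_eq_intros simp: P_def field_simps power2_eq_square)
  from solves_at_s1_flow[OF assms(1) this, of "- 1 - a"]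
  have "solves_at (a - 2 * v t * P t)
    (\<lambda>s. c_q1 (s1 (q1 s, p1 s, q2 s, p2 s, s, a))) (\<lambda>s. c_p1 (s1 (q1 s, p1 s, q2 s, p2 s, s, a)))
    (\<lambda>s. c_q2 (s1 (q1 s, p1 s, q2 s, p2 s, s, a))) (\<lambda>s. c_p2 (s1 (q1 s, p1 s, q2 s, p2 s, s, a))) t"
    by (simp only: s1_curve P_param)
  moreover have "a - 2 * v t * P t = - 1 - a"
    using \<open>P t \<noteq> 0\<close> by (simp add: v_def field_simps)
  ultimately show ?thesis
    by simp
qed

lemma backlund_s0: "backlund s0 (\<lambda>x. c_p1 x \<noteq> 0) (\<lambda>a. 1 - a)"
proof (rule backlund_if_solves_at)
  show "c_t (s0 x) = c_t x" "c_a (s0 x) = 1 - c_a x" for x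
    by (induction x rule: prod_induct6) (simp_all add: s0_def)
qed (simp add: solves_at_s0)

lemma backlund_s1: "backlund s1 (\<lambda>x. PP x \<noteq> 0) (\<lambda>a. - 1 - a)"
proof (rule backlund_if_solves_at)
  show "c_t (s1 x) = c_t x" for x
    by (induction x rule: prod_induct6) (simp add: s1_def Let_def)
qed (simp_all add: c_a_s1 solves_at_s1)

lemma backlund_pi_map: "backlund pi_map (\<lambda>x. True) (\<lambda>a. - a)"
proof (rule backlund_if_solves_at)
  show "c_t (pi_map x) = c_t x" "c_a (pi_map x) = - c_a x" for x
    by (induction x rule: prod_induct6) (simp_all add: pi_map_def)
qed (simp add: solves_at_pi_map)

text \<open>The group relations are proved above without the nonvanishing hypotheses: where p1 or P
  vanishes, x / 0 = 0 turns s0 and s1 into mere changes of the parameter.\<close>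

theorem theorem6p2:
  shows "backlund s0 (\<lambda>x. c_p1 x \<noteq> 0) (\<lambda>a. 1 - a)
     \<and> backlund s1 (\<lambda>x. PP x \<noteq> 0) (\<lambda>a. - 1 - a)
     \<and> backlund pi_map (\<lambda>x. True) (\<lambda>a. - a)
     \<and> (\<forall>x. c_p1 x \<noteq> 0 \<longrightarrow> s0 (s0 x) = x)
     \<and> (\<forall>x. PP x \<noteq> 0 \<longrightarrow> s1 (s1 x) = x)
     \<and> (\<forall>x. pi_map (pi_map x) = x)
     \<and> (\<forall>x. PP x \<noteq> 0 \<longrightarrow> s0 (pi_map x) = pi_map (s1 x))"
  using backlund_s0 backlund_s1 backlund_pi_map s0_s0 s1_s1 pi_map_pi_map s0_pi_map by blast

end
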